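(* Let $\alpha$ be a unit-speed curve in $\mathbb{R}^3$ with arc length $s$, nonzero curvature $\kappa$ and torsion $\tau$. Let $\alpha_T$ be its tangent indicatrix, with arc length $s_T=\int\kappa\,ds$, and let $\beta$ be an evolute-direction curve of $\alpha_T$ (an $X$-direction curve of $\alpha_T$ with $N_\beta=T_T$). Then there is a function $\psi(s)$ with $$\frac{d\psi}{ds}=\frac{\kappa^3}{(\kappa^2+\tau^2)^{3/2}}\Big(\frac{\tau}{\kappa}\Big)'\sqrt{1+\Big(\frac{\tau}{\kappa}\Big)^2}$$ such that, at corresponding parameter values, $$\frac{\tau_\beta}{\kappa_\beta}=-\cot\psi.$$ Moreover, $$\frac{\kappa_\beta^2}{(\kappa_\beta^2+\tau_\beta^2)^{3/2}}\,\frac{d}{ds_T}\Big(\frac{\tau_\beta}{\kappa_\beta}\Big)=\frac{\kappa^2}{(\kappa^2+\tau^2)^{3/2}}\Big(\frac{\tau}{\kappa}\Big)'.$$ Here $'$ denotes $d/ds$.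
   Context: Let $\alpha:I\subset\mathbb{R}\to\mathbb{R}^3$ be a unit-speed curve with arc length $s$, curvature $\kappa>0$, torsion $\tau$ and Frenet frame $\{T,N,B\}$. Put $f=\tau/\kappa$ and $\sigma=\frac{\kappa^2}{(\kappa^2+\tau^2)^{3/2}}(\tau/\kappa)'$, with $'=d/ds$. The tangent indicatrix of $\alpha$ is the curve $\alpha_T=T$ on the unit sphere. Its arc length is $s_T=\int\kappa\,ds$, so parameters $s$ and $s_T(s)$ correspond. Its Frenet apparatus is $\{T_T,N_T,B_T,\kappa_T,\tau_T\}$, with $\frac{dT_T}{ds_T}=\kappa_TN_T$, $\frac{dN_T}{ds_T}=-\kappa_TT_T+\tau_TB_T$ and $\frac{dB_T}{ds_T}=-\tau_TN_T$. It is known that $T_T=N$, $\kappa_T=\sqrt{1+f^2}$ and $\tau_T=\sigma\sqrt{1+f^2}$. Let $x,y,z$ be real functions of $s_T$ with $x^2+y^2+z^2=1$, and set $X=xT_T+yN_T+zB_T$. An integral curve $\beta$ of $X$, meaning $d\beta/ds_T=X$, is an $X$-direction curve of $\alpha_T$. It has unit speed with arc length $s_T$. It is regarded as a Frenet curve with frame $\{T_\beta=X,N_\beta,B_\beta\}$, curvature $\kappa_\beta>0$ and torsion $\tau_\beta$. $\beta$ is an evolute-direction curve of $\alpha_T$ if $N_\beta=T_T$. *)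

theory Defs
  imports "HOL-Analysis.Analysis" "HOL-Analysis.Cross3"
begin

definition frenet_curve ::
  "real set \<Rightarrow> (real \<Rightarrow> real^3) \<Rightarrow> (real \<Rightarrow> real^3) \<Rightarrow> (real \<Rightarrow> real^3) \<Rightarrow>
   (real \<Rightarrow> real^3) \<Rightarrow> (real \<Rightarrow> real) \<Rightarrow> (real \<Rightarrow> real) \<Rightarrow> bool" where
  "frenet_curve S c Tt Nn Bb k t \<longleftrightarrow>
    (\<forall>u\<in>S.
       (c has_vector_derivative Tt u) (at u) \<and>
       (Tt has_vector_derivative (k u *\<^sub>R Nn u)) (at u) \<and>
       (Nn has_vector_derivative (- (k u *\<^sub>R Tt u) + t u *\<^sub>R Bb u)) (at u) \<and>
       (Bb has_vector_derivative (- (t u *\<^sub>R Nn u))) (at u) \<and>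
       norm (Tt u) = 1 \<and> norm (Nn u) = 1 \<and> Tt u \<bullet> Nn u = 0 \<and>
       Bb u = cross3 (Tt u) (Nn u) \<and> k u > 0)"

end

theory Submission
  imports Defs
begin

(* Since N_beta = T_T, the unit tangent T_beta is orthogonal to T_T, so T_beta = Y N_T + Z B_T
   with Y^2 + Z^2 = 1. Differentiating N_beta = T_T and comparing the Frenet equations of beta
   and alpha_T gives kappa_beta = -kappa_T Y and tau_beta = kappa_T Z, so Y < 0, while the
   Frenet equations of alpha_T make (Y, Z) rotate with angular speed tau_T:
   Y' = tau_T Z and Z' = -tau_T Y. Hence psi = -arccos Z has psi' = tau_T with respect to s_T,
   tau_beta / kappa_beta = -Z / Y = -cot psi, and (tau_beta / kappa_beta)' = tau_T / Y^2, which turns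
   the left-hand side of the second identity into tau_T / kappa_T = sigma. The chain rule with
   ds_T/ds = kappa gives the derivative of psi with respect to s. *)

lemma DERIV_pos_imp_open_image:
  fixes g g' :: "real \<Rightarrow> real"
  assumes "open I" "is_interval I"
    and deriv: "\<And>s. s \<in> I \<Longrightarrow> (g has_real_derivative g' s) (at s)"
    and pos: "\<And>s. s \<in> I \<Longrightarrow> g' s > 0"
  shows "open (g ` I)"
proof -
  have "strict_mono_on I g"
  proof (rule strict_mono_onI)
    fix a b assume "a \<in> I" "b \<in> I" "a < b"
    show "g a < g b"
    proof (rule DERIV_pos_imp_increasing[OF \<open>a < b\<close>])
      fix x assume "a \<le> x" "x \<le> b"
      then have "x \<in> I"
        using \<open>is_interval I\<close> \<open>a \<in> I\<close> \<open>b \<in> I\<close> unfolding is_interval_1 by blast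
      then show "\<exists>y. (g has_real_derivative y) (at x) \<and> y > 0"
        using deriv pos by blast
    qed
  qed
  then have "inj_on g I"
    by (rule strict_mono_on_imp_inj_on)
  moreover have "continuous_on I g"
    using deriv by (meson DERIV_isCont continuous_at_imp_continuous_on)
  ultimately have "\<forall>T. open T \<and> T \<subseteq> I \<longrightarrow> open (g ` T)"
    using injective_eq_1d_open_map_UNIV \<open>is_interval I\<close> by blast
  then show ?thesis
    using \<open>open I\<close> by blast
qed

lemma has_real_derivative_neg_arccos:
  fixes Z :: "real \<Rightarrow> real"
  assumes dZ: "(Z has_real_derivative - w * y) (at u)" and unit: "y\<^sup>2 + (Z u)\<^sup>2 = 1" and "y < 0"
  shows "((\<lambda>v. - arccos (Z v)) has_real_derivative w) (at u)"
proof -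
  have "y\<^sup>2 > 0" using \<open>y < 0\<close> by simp
  then have "(Z u)\<^sup>2 < 1" using unit by linarith
  then have "\<bar>Z u\<bar> < 1" by (simp add: abs_square_less_1)
  moreover have "sqrt (1 - (Z u)\<^sup>2) = - y"
    using unit \<open>y < 0\<close> by (simp flip: unit add: real_sqrt_abs)
  ultimately have "(arccos has_real_derivative inverse y) (at (Z u))"
    using DERIV_arccos[of "Z u"] by (simp add: abs_less_iff)
  from DERIV_chain2[OF this dZ]
  have "((\<lambda>v. arccos (Z v)) has_real_derivative inverse y * (- w * y)) (at u)" .
  moreover have "inverse y * (- w * y) = - w"
    using \<open>y < 0\<close> by (simp add: field_simps)
  ultimately have "((\<lambda>v. arccos (Z v)) has_real_derivative - w) (at u)"
    by (rule DERIV_cong)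
  from DERIV_minus[OF this] show ?thesis
    by simp
qed

lemma cot_arccos:
  assumes "y\<^sup>2 + z\<^sup>2 = 1" "y < 0"
  shows "cot (arccos z) = - z / y"
proof -
  have "z\<^sup>2 \<le> 1" using assms(1) by (metis le_add_same_cancel2 zero_le_power2)
  then have "-1 \<le> z" "z \<le> 1" by (simp_all add: abs_square_le_1 abs_le_iff)
  moreover have "sqrt (1 - z\<^sup>2) = - y"
    using assms by (simp flip: assms(1) add: real_sqrt_abs)
  ultimately show ?thesis
    by (simp add: cot_def sin_arccos)
qed

lemma has_real_derivative_quotient_of_rotation:
  assumes dY: "(Y has_real_derivative w * Z u) (at u)" and dZ: "(Z has_real_derivative - w * Y u) (at u)"
    and unit: "(Y u)\<^sup>2 + (Z u)\<^sup>2 = 1" and "Y u \<noteq> 0"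
  shows "((\<lambda>v. - (Z v / Y v)) has_real_derivative w / (Y u)\<^sup>2) (at u)"
proof -
  have "- ((- w * Y u * Y u - Z u * (w * Z u)) / (Y u * Y u)) = w * ((Y u)\<^sup>2 + (Z u)\<^sup>2) / (Y u)\<^sup>2"
    by (simp only: minus_divide_left power2_eq_square) (simp add: algebra_simps)
  also have "\<dots> = w / (Y u)\<^sup>2"
    using unit by simp
  finally show ?thesis
    using DERIV_minus[OF DERIV_divide[OF dZ dY \<open>Y u \<noteq> 0\<close>]] by simp
qed

lemma power2_powr_three_halves:
  fixes k :: real
  assumes "0 < k"
  shows "(k\<^sup>2) powr (3/2) = k ^ 3"
proof -
  have "(k\<^sup>2) powr (3/2) = (k powr real 2) powr (3/2)"
    using assms by (simp add: powr_realpow)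
  also have "\<dots> = k powr real 3"
    by (simp add: powr_powr)
  also have "\<dots> = k ^ 3"
    using assms by (rule powr_realpow)
  finally show ?thesis .
qed

lemma inner_cross3_orthonormal:
  fixes t n :: "real^3"
  assumes "norm t = 1" "norm n = 1" "t \<bullet> n = 0"
  shows "n \<bullet> n = 1" "cross3 t n \<bullet> cross3 t n = 1" "t \<bullet> cross3 t n = 0" "n \<bullet> cross3 t n = 0"
  using assms dot_cross[of t n t n] by (simp_all add: norm_eq_1 dot_cross_self inner_commute)

lemma inner_cross3_cyclic: "(a::real^3) \<bullet> cross3 b c = b \<bullet> cross3 c a"
  by (simp add: cross3_simps)

lemma curvature_torsion_in_evolute_frame:
  fixes t n t\<beta> b\<beta> :: "real^3"
  assumes frame: "norm t = 1" "norm n = 1" "t \<bullet> n = 0"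
    and frame\<beta>: "norm t\<beta> = 1" "t\<beta> \<bullet> t = 0" "b\<beta> = cross3 t\<beta> t"
    and frenet: "\<kappa> *\<^sub>R n = - (\<kappa>\<beta> *\<^sub>R t\<beta>) + \<tau>\<beta> *\<^sub>R b\<beta>"
  shows "\<kappa>\<beta> = - \<kappa> * (t\<beta> \<bullet> n)" "\<tau>\<beta> = \<kappa> * (t\<beta> \<bullet> cross3 t n)" "\<kappa>\<beta>\<^sup>2 + \<tau>\<beta>\<^sup>2 = \<kappa>\<^sup>2"
proof -
  have "b\<beta> \<bullet> t\<beta> = 0" "t\<beta> \<bullet> b\<beta> = 0" "b\<beta> \<bullet> b\<beta> = 1" "t\<beta> \<bullet> t\<beta> = 1"
    using inner_cross3_orthonormal[OF frame\<beta>(1) frame(1) frame\<beta>(2)] frame\<beta>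
    by (simp_all add: inner_commute norm_eq_1)
  note orth = this
  have "t\<beta> \<bullet> (\<kappa> *\<^sub>R n) = - \<kappa>\<beta>"
    unfolding frenet using orth by (simp add: inner_add_right inner_diff_right)
  then show "\<kappa>\<beta> = - \<kappa> * (t\<beta> \<bullet> n)" by simp
  have "b\<beta> \<bullet> (\<kappa> *\<^sub>R n) = \<tau>\<beta>"
    unfolding frenet using orth by (simp add: inner_add_right inner_diff_right)
  moreover have "b\<beta> \<bullet> n = t\<beta> \<bullet> cross3 t n"
    using frame\<beta>(3) inner_cross3_cyclic by (metis inner_commute)
  ultimately show "\<tau>\<beta> = \<kappa> * (t\<beta> \<bullet> cross3 t n)" by simp
  have "(\<kappa> *\<^sub>R n) \<bullet> (\<kappa> *\<^sub>R n) = \<kappa>\<^sup>2"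
    using inner_cross3_orthonormal[OF frame] by (simp add: power2_eq_square)
  moreover have "(\<kappa> *\<^sub>R n) \<bullet> (\<kappa> *\<^sub>R n) = \<kappa>\<beta>\<^sup>2 + \<tau>\<beta>\<^sup>2"
    unfolding frenet using orth
    by (simp add: inner_add_left inner_add_right inner_diff_left inner_diff_right power2_eq_square)
  ultimately show "\<kappa>\<beta>\<^sup>2 + \<tau>\<beta>\<^sup>2 = \<kappa>\<^sup>2" by simp
qed

lemma frenet_curveD:
  assumes "frenet_curve S c T N B \<kappa> \<tau>" "u \<in> S"
  shows "(c has_vector_derivative T u) (at u)"
    and "(T has_vector_derivative (\<kappa> u *\<^sub>R N u)) (at u)"
    and "(N has_vector_derivative (- (\<kappa> u *\<^sub>R T u) + \<tau> u *\<^sub>R B u)) (at u)"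
    and "(B has_vector_derivative (- (\<tau> u *\<^sub>R N u))) (at u)"
    and "norm (T u) = 1" "norm (N u) = 1" "T u \<bullet> N u = 0"
    and "B u = cross3 (T u) (N u)" "\<kappa> u > 0"
  using assms unfolding frenet_curve_def by blast+

locale evolute_direction =
  fixes U :: "real set"
    and c T N B :: "real \<Rightarrow> real^3" and \<kappa> \<tau> :: "real \<Rightarrow> real"
    and \<beta> T\<beta> N\<beta> B\<beta> :: "real \<Rightarrow> real^3" and \<kappa>\<beta> \<tau>\<beta> :: "real \<Rightarrow> real"
  assumes open_U: "open U"
    and base: "frenet_curve U c T N B \<kappa> \<tau>"
    and curve: "frenet_curve U \<beta> T\<beta> N\<beta> B\<beta> \<kappa>\<beta> \<tau>\<beta>"
    and evolute: "\<And>v. v \<in> U \<Longrightarrow> N\<beta> v = T v"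
begin

lemma curvature_torsion:
  assumes u: "u \<in> U"
  shows "\<kappa>\<beta> u = - \<kappa> u * (T\<beta> u \<bullet> N u)" "\<tau>\<beta> u = \<kappa> u * (T\<beta> u \<bullet> B u)"
    "(T\<beta> u \<bullet> N u)\<^sup>2 + (T\<beta> u \<bullet> B u)\<^sup>2 = 1"
proof -
  note A = frenet_curveD[OF base u] and C = frenet_curveD[OF curve u]
  have "(T has_vector_derivative (- (\<kappa>\<beta> u *\<^sub>R T\<beta> u) + \<tau>\<beta> u *\<^sub>R B\<beta> u)) (at u)"
    by (rule has_vector_derivative_transform_within_open[OF C(3) open_U u]) (use evolute in auto)
  then have frenet: "\<kappa> u *\<^sub>R N u = - (\<kappa>\<beta> u *\<^sub>R T\<beta> u) + \<tau>\<beta> u *\<^sub>R B\<beta> u"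
    using vector_derivative_unique_at A(2) by blast
  have "T\<beta> u \<bullet> T u = 0" "B\<beta> u = cross3 (T\<beta> u) (T u)"
    using C(7,8) evolute[OF u] by simp_all
  note E = curvature_torsion_in_evolute_frame[OF A(5-7) C(5) this frenet]
  show \<kappa>\<beta>: "\<kappa>\<beta> u = - \<kappa> u * (T\<beta> u \<bullet> N u)" and \<tau>\<beta>: "\<tau>\<beta> u = \<kappa> u * (T\<beta> u \<bullet> B u)"
    using E A(8) by simp_all
  have "(\<kappa> u)\<^sup>2 * ((T\<beta> u \<bullet> N u)\<^sup>2 + (T\<beta> u \<bullet> B u)\<^sup>2) = (\<kappa> u)\<^sup>2"
    using E(3) unfolding \<kappa>\<beta> \<tau>\<beta> by (simp add: power_mult_distrib algebra_simps)
  then show "(T\<beta> u \<bullet> N u)\<^sup>2 + (T\<beta> u \<bullet> B u)\<^sup>2 = 1"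
    using A(9) by simp
qed

lemma tangent_coordinates_deriv:
  assumes u: "u \<in> U"
  shows "((\<lambda>v. T\<beta> v \<bullet> N v) has_real_derivative \<tau> u * (T\<beta> u \<bullet> B u)) (at u)"
    and "((\<lambda>v. T\<beta> v \<bullet> B v) has_real_derivative - \<tau> u * (T\<beta> u \<bullet> N u)) (at u)"
proof -
  note A = frenet_curveD[OF base u] and C = frenet_curveD[OF curve u]
  have orth: "N\<beta> u \<bullet> N u = 0" "N\<beta> u \<bullet> B u = 0" "T\<beta> u \<bullet> T u = 0"
    using inner_cross3_orthonormal[OF A(5-7)] A(7,8) C(7) evolute[OF u] by simp_all
  show "((\<lambda>v. T\<beta> v \<bullet> N v) has_real_derivative \<tau> u * (T\<beta> u \<bullet> B u)) (at u)"
    using bounded_bilinear.has_vector_derivative[OF bounded_bilinear_inner C(2) A(3)] orth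
    by (simp add: has_real_derivative_iff_has_vector_derivative inner_diff_right)
  show "((\<lambda>v. T\<beta> v \<bullet> B v) has_real_derivative - \<tau> u * (T\<beta> u \<bullet> N u)) (at u)"
    using bounded_bilinear.has_vector_derivative[OF bounded_bilinear_inner C(2) A(4)] orth
    by (simp add: has_real_derivative_iff_has_vector_derivative)
qed

lemma angle:
  assumes u: "u \<in> U"
  shows "((\<lambda>v. - arccos (T\<beta> v \<bullet> B v)) has_real_derivative \<tau> u) (at u)"
    and "\<tau>\<beta> u / \<kappa>\<beta> u = - cot (- arccos (T\<beta> u \<bullet> B u))"
proof -
  note C = curvature_torsion[OF u]
  have "T\<beta> u \<bullet> N u < 0"
    using C(1) frenet_curveD(9)[OF base u] frenet_curveD(9)[OF curve u] by (simp add: mult_less_0_iff)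
  then show "((\<lambda>v. - arccos (T\<beta> v \<bullet> B v)) has_real_derivative \<tau> u) (at u)"
    using has_real_derivative_neg_arccos tangent_coordinates_deriv(2)[OF u] C(3) by blast
  show "\<tau>\<beta> u / \<kappa>\<beta> u = - cot (- arccos (T\<beta> u \<bullet> B u))"
    using cot_arccos[OF C(3) \<open>T\<beta> u \<bullet> N u < 0\<close>] C(1,2) frenet_curveD(9)[OF base u] by simp
qed

lemma torsion_curvature_ratio_deriv:
  assumes u: "u \<in> U"
  shows "((\<lambda>v. \<tau>\<beta> v / \<kappa>\<beta> v) has_real_derivative \<tau> u / (T\<beta> u \<bullet> N u)\<^sup>2) (at u)"
    and "\<kappa>\<beta> u ^ 2 / (\<kappa>\<beta> u ^ 2 + \<tau>\<beta> u ^ 2) powr (3/2) * (\<tau> u / (T\<beta> u \<bullet> N u)\<^sup>2) = \<tau> u / \<kappa> u"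
proof -
  define Y where "Y = (\<lambda>v. T\<beta> v \<bullet> N v)"
  define Z where "Z = (\<lambda>v. T\<beta> v \<bullet> B v)"
  have C: "\<kappa>\<beta> v = - \<kappa> v * Y v" "\<tau>\<beta> v = \<kappa> v * Z v" "(Y v)\<^sup>2 + (Z v)\<^sup>2 = 1" "\<kappa> v > 0"
    if "v \<in> U" for v
    using curvature_torsion[OF that] frenet_curveD(9)[OF base that] unfolding Y_def Z_def by simp_all
  have "Y u \<noteq> 0"
    using C(1)[OF u] frenet_curveD(9)[OF curve u] by auto
  have dY: "(Y has_real_derivative \<tau> u * Z u) (at u)" and dZ: "(Z has_real_derivative - \<tau> u * Y u) (at u)"
    using tangent_coordinates_deriv[OF u] unfolding Y_def Z_def by simp_all
  have "((\<lambda>v. \<tau>\<beta> v / \<kappa>\<beta> v) has_real_derivative \<tau> u / (Y u)\<^sup>2) (at u)"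
  proof (rule has_field_derivative_transform_within_open[OF _ open_U u])
    show "((\<lambda>v. - (Z v / Y v)) has_real_derivative \<tau> u / (Y u)\<^sup>2) (at u)"
      by (rule has_real_derivative_quotient_of_rotation[OF dY dZ C(3)[OF u] \<open>Y u \<noteq> 0\<close>])
    show "- (Z v / Y v) = \<tau>\<beta> v / \<kappa>\<beta> v" if "v \<in> U" for v
      using C[OF that] by simp
  qed
  then show "((\<lambda>v. \<tau>\<beta> v / \<kappa>\<beta> v) has_real_derivative \<tau> u / (T\<beta> u \<bullet> N u)\<^sup>2) (at u)"
    by (simp add: Y_def)
  have "\<kappa>\<beta> u ^ 2 + \<tau>\<beta> u ^ 2 = (\<kappa> u)\<^sup>2 * ((Y u)\<^sup>2 + (Z u)\<^sup>2)"
    using C(1,2)[OF u] by (simp add: power_mult_distrib algebra_simps)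
  then have "(\<kappa>\<beta> u ^ 2 + \<tau>\<beta> u ^ 2) powr (3/2) = \<kappa> u ^ 3"
    using C(3,4)[OF u] by (simp add: power2_powr_three_halves)
  then have "\<kappa>\<beta> u ^ 2 / (\<kappa>\<beta> u ^ 2 + \<tau>\<beta> u ^ 2) powr (3/2) * (\<tau> u / (Y u)\<^sup>2)
      = (\<kappa> u)\<^sup>2 * (Y u)\<^sup>2 / \<kappa> u ^ 3 * (\<tau> u / (Y u)\<^sup>2)"
    using C(1)[OF u] by (simp add: power_mult_distrib)
  also have "\<dots> = \<tau> u / \<kappa> u"
    using C(4)[OF u] \<open>Y u \<noteq> 0\<close> by (simp add: field_simps power2_eq_square power3_eq_cube)
  finally show "\<kappa>\<beta> u ^ 2 / (\<kappa>\<beta> u ^ 2 + \<tau>\<beta> u ^ 2) powr (3/2) * (\<tau> u / (T\<beta> u \<bullet> N u)\<^sup>2) = \<tau> u / \<kappa> u"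
    unfolding Y_def .
qed

end

theorem corollary4p6:
  fixes I :: "real set"
    and \<alpha> T N B :: "real \<Rightarrow> real^3" and \<kappa> \<tau> :: "real \<Rightarrow> real"
    and sT :: "real \<Rightarrow> real"
    and \<alpha>T TT NT BT :: "real \<Rightarrow> real^3" and \<kappa>T \<tau>T :: "real \<Rightarrow> real"
    and x y z :: "real \<Rightarrow> real"
    and \<beta> T\<beta> N\<beta> B\<beta> :: "real \<Rightarrow> real^3" and \<kappa>\<beta> \<tau>\<beta> :: "real \<Rightarrow> real"
  defines "f \<equiv> (\<lambda>s. \<tau> s / \<kappa> s)"
  defines "\<sigma> \<equiv> (\<lambda>s. \<kappa> s ^ 2 / (\<kappa> s ^ 2 + \<tau> s ^ 2) powr (3/2) * deriv f s)"
  assumes I: "open I" "is_interval I" "I \<noteq> {}"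
    \<comment> \<open>the curve alpha, unit speed, with Frenet apparatus\<close>
    and alpha: "frenet_curve I \<alpha> T N B \<kappa> \<tau>"
    and f_diff: "\<And>s. s \<in> I \<Longrightarrow> f differentiable (at s)"
    \<comment> \<open>arc length of the tangent indicatrix\<close>
    and sT: "\<And>s. s \<in> I \<Longrightarrow> (sT has_real_derivative \<kappa> s) (at s)"
    \<comment> \<open>the tangent indicatrix alpha_T = T, reparametrised by its arc length sT,
        with its Frenet apparatus\<close>
    and alphaT: "\<And>s. s \<in> I \<Longrightarrow> \<alpha>T (sT s) = T s"
    and alphaT_frenet: "frenet_curve (sT ` I) \<alpha>T TT NT BT \<kappa>T \<tau>T"
    \<comment> \<open>known facts about the Frenet apparatus of alpha_T\<close>
    and TT: "\<And>s. s \<in> I \<Longrightarrow> TT (sT s) = N s"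
    and kT: "\<And>s. s \<in> I \<Longrightarrow> \<kappa>T (sT s) = sqrt (1 + (f s)^2)"
    and tT: "\<And>s. s \<in> I \<Longrightarrow> \<tau>T (sT s) = \<sigma> s * sqrt (1 + (f s)^2)"
    \<comment> \<open>beta is an X-direction curve of alpha_T, X = x TT + y NT + z BT\<close>
    and xyz: "\<And>u. u \<in> sT ` I \<Longrightarrow> (x u)^2 + (y u)^2 + (z u)^2 = 1"
    and beta_X: "\<And>u. u \<in> sT ` I \<Longrightarrow>
        (\<beta> has_vector_derivative (x u *\<^sub>R TT u + y u *\<^sub>R NT u + z u *\<^sub>R BT u)) (at u)"
    and beta: "frenet_curve (sT ` I) \<beta> T\<beta> N\<beta> B\<beta> \<kappa>\<beta> \<tau>\<beta>"
    \<comment> \<open>evolute-direction curve\<close>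
    and evolute: "\<And>u. u \<in> sT ` I \<Longrightarrow> N\<beta> u = TT u"
  shows "(\<exists>\<psi>. \<forall>s\<in>I.
            (\<psi> has_real_derivative
               (\<kappa> s ^ 3 / (\<kappa> s ^ 2 + \<tau> s ^ 2) powr (3/2) * deriv f s * sqrt (1 + (f s)^2)))
               (at s) \<and>
            \<tau>\<beta> (sT s) / \<kappa>\<beta> (sT s) = - cot (\<psi> s))
       \<and> (\<forall>s\<in>I. \<exists>d.
            ((\<lambda>u. \<tau>\<beta> u / \<kappa>\<beta> u) has_real_derivative d) (at (sT s)) \<and>
            \<kappa>\<beta> (sT s) ^ 2 / (\<kappa>\<beta> (sT s) ^ 2 + \<tau>\<beta> (sT s) ^ 2) powr (3/2) * d
              = \<kappa> s ^ 2 / (\<kappa> s ^ 2 + \<tau> s ^ 2) powr (3/2) * deriv f s)"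
proof -
  have "open (sT ` I)"
    using DERIV_pos_imp_open_image[OF I(1,2) sT] frenet_curveD(9)[OF alpha] by blast
  then interpret evolute_direction "sT ` I" \<alpha>T TT NT BT \<kappa>T \<tau>T \<beta> T\<beta> N\<beta> B\<beta> \<kappa>\<beta> \<tau>\<beta>
    using alphaT_frenet beta evolute by unfold_locales
  have dpsi: "\<tau>T (sT s) * \<kappa> s
      = \<kappa> s ^ 3 / (\<kappa> s ^ 2 + \<tau> s ^ 2) powr (3/2) * deriv f s * sqrt (1 + (f s)^2)" if "s \<in> I" for s
    using tT[OF that] by (simp add: \<sigma>_def power3_eq_cube power2_eq_square)
  have "1 + (f s)\<^sup>2 \<noteq> 0" for s
    using zero_le_power2[of "f s"] by linarith
  then have ratio: "\<tau>T (sT s) / \<kappa>T (sT s) = \<kappa> s ^ 2 / (\<kappa> s ^ 2 + \<tau> s ^ 2) powr (3/2) * deriv f s"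
    if "s \<in> I" for s
    using tT[OF that] kT[OF that] by (simp add: \<sigma>_def)
  show ?thesis
  proof (intro conjI exI[of _ "\<lambda>s. - arccos (T\<beta> (sT s) \<bullet> BT (sT s))"] ballI)
    fix s assume s: "s \<in> I"
    then show "((\<lambda>s. - arccos (T\<beta> (sT s) \<bullet> BT (sT s))) has_real_derivative
        \<kappa> s ^ 3 / (\<kappa> s ^ 2 + \<tau> s ^ 2) powr (3/2) * deriv f s * sqrt (1 + (f s)^2)) (at s)"
      using DERIV_chain2[OF angle(1) sT] dpsi by simp
    show "\<tau>\<beta> (sT s) / \<kappa>\<beta> (sT s) = - cot (- arccos (T\<beta> (sT s) \<bullet> BT (sT s)))"
      using angle(2) s by simp
  next
    fix s assume s: "s \<in> I"
    then have "sT s \<in> sT ` I"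
      by simp
    then show "\<exists>d. ((\<lambda>u. \<tau>\<beta> u / \<kappa>\<beta> u) has_real_derivative d) (at (sT s)) \<and>
        \<kappa>\<beta> (sT s) ^ 2 / (\<kappa>\<beta> (sT s) ^ 2 + \<tau>\<beta> (sT s) ^ 2) powr (3/2) * d
          = \<kappa> s ^ 2 / (\<kappa> s ^ 2 + \<tau> s ^ 2) powr (3/2) * deriv f s"
      using torsion_curvature_ratio_deriv ratio[OF s] by metis
  qed
qed

end
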